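(* Let $1\le k\le n$, let $a_\rho$ ($\rho\in\Sigma(k,n)$) be real numbers and let $\lambda_0,\dots,\lambda_n\ge0$ be real numbers. Define the symmetric matrix $M=(m_{\rho\tilde\rho})_{\rho,\tilde\rho\in\Sigma(k,n)}$ by $$m_{\rho\tilde\rho}=\begin{cases}\lambda_{\rho^*}\big(\lambda_0+\sum_{i=1}^k\lambda_{\rho(i)}\big)&\text{if }\rho=\tilde\rho,\\ (-1)^{s+t}\,\lambda_{\rho^*}\lambda_{\rho(s)}&\text{if }\mathcal R(\rho)\cap\mathcal R(\tilde\rho^* )=\{\rho(s)\},\ \mathcal R(\rho^* )\cap\mathcal R(\tilde\rho)=\{\tilde\rho(t)\},\\ 0&\text{otherwise.}\end{cases}$$ Then $$\sum_{\rho,\tilde\rho\in\Sigma(k,n)}a_\rho a_{\tilde\rho}m_{\rho\tilde\rho}=\lambda_0\sum_{\rho\in\Sigma(k,n)}a_\rho^2\lambda_{\rho^*}+\langle\theta,\theta\rangle_{\mathrm{Alt}^{n-k+1}\mathbb{R}^n},\qquad \theta=\sum_{\rho\in\Sigma(k,n)}(-1)^{\sigma(\rho)}a_\rho\sum_{i=1}^k\sqrt{\lambda_{\rho^*}\lambda_{\rho(i)}}\;\mu'_{\rho^*}\wedge\mu'_{\rho(i)}.$$ In particular the left-hand side is nonnegative.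
   Context: $\Sigma(k,n)$ is the set of strictly increasing maps $\{1,\dots,k\}\to\{1,\dots,n\}$; for $\rho\in\Sigma(k,n)$, $\rho^*$ is the increasing map with range $\{1,\dots,n\}\setminus\mathcal R(\rho)$; $s,t\in\{1,\dots,k\}$. For a set $S$ of indices, $\lambda_S=\prod_{i\in S}\lambda_i$, and $\lambda_{\rho^*}=\lambda_{\mathcal R(\rho^* )}$. $\sigma(\rho)$ is the number of inversions of the sequence $\rho(1),\dots,\rho(k),\rho^*(1),\dots,\rho^*(n-k)$. $\mu_1,\dots,\mu_n$ is an orthonormal basis of $\mathbb{R}^n$, $\mu'_1,\dots,\mu'_n$ its dual basis, $\mu'_{\rho^*}=\mu'_{\rho^*(1)}\wedge\cdots\wedge\mu'_{\rho^*(n-k)}$, and the inner product on $\mathrm{Alt}^m\mathbb{R}^n$ is $\langle\omega,\eta\rangle=\sum_{\tau}\omega(\mu_{\tau(1)},\dots,\mu_{\tau(m)})\,\eta(\mu_{\tau(1)},\dots,\mu_{\tau(m)})$, summed over strictly increasing $\tau:\{1,\dots,m\}\to\{1,\dots,n\}$. *)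

theory Defs
  imports "HOL-Analysis.Analysis"
begin

text \<open>Sigma(k,n): strictly increasing maps {1..k} -> {1..n}, represented as functions
  nat => nat that are 0 outside {1..k} (so that the set is finite).\<close>
definition Sig :: "nat \<Rightarrow> nat \<Rightarrow> (nat \<Rightarrow> nat) set" where
  "Sig k n = {\<rho>. \<rho> ` {1..k} \<subseteq> {1..n} \<and> strict_mono_on {1..k} \<rho> \<and> (\<forall>i. i \<notin> {1..k} \<longrightarrow> \<rho> i = 0)}"

definition cmap :: "nat \<Rightarrow> nat \<Rightarrow> (nat \<Rightarrow> nat) \<Rightarrow> nat \<Rightarrow> nat" where
  "cmap k n \<rho> i = (if i \<in> {1..n-k} then sorted_list_of_set ({1..n} - \<rho> ` {1..k}) ! (i - 1) else 0)"

definition lam_star :: "nat \<Rightarrow> nat \<Rightarrow> (nat \<Rightarrow> real) \<Rightarrow> (nat \<Rightarrow> nat) \<Rightarrow> real" where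
  "lam_star k n lam \<rho> = (\<Prod>i\<in>cmap k n \<rho> ` {1..n-k}. lam i)"

definition inversions :: "nat list \<Rightarrow> nat" where
  "inversions xs = card {(i, j). i < j \<and> j < length xs \<and> xs ! j < xs ! i}"

definition sig_inv :: "nat \<Rightarrow> nat \<Rightarrow> (nat \<Rightarrow> nat) \<Rightarrow> nat" where
  "sig_inv k n \<rho> = inversions (map \<rho> [1..<k+1] @ map (cmap k n \<rho>) [1..<n-k+1])"

definition mentry :: "nat \<Rightarrow> nat \<Rightarrow> (nat \<Rightarrow> real) \<Rightarrow> (nat \<Rightarrow> nat) \<Rightarrow> (nat \<Rightarrow> nat) \<Rightarrow> real" where
  "mentry k n lam \<rho> \<rho>' =
     (if \<rho> = \<rho>' then lam_star k n lam \<rho> * (lam 0 + (\<Sum>i=1..k. lam (\<rho> i)))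
      else if (\<exists>s\<in>{1..k}. \<exists>t\<in>{1..k}.
                 \<rho> ` {1..k} \<inter> cmap k n \<rho>' ` {1..n-k} = {\<rho> s} \<and>
                 cmap k n \<rho> ` {1..n-k} \<inter> \<rho>' ` {1..k} = {\<rho>' t})
      then (let (s, t) = (SOME (s, t). s \<in> {1..k} \<and> t \<in> {1..k} \<and>
                 \<rho> ` {1..k} \<inter> cmap k n \<rho>' ` {1..n-k} = {\<rho> s} \<and>
                 cmap k n \<rho> ` {1..n-k} \<inter> \<rho>' ` {1..k} = {\<rho>' t})
            in (-1) ^ (s + t) * lam_star k n lam \<rho> * lam (\<rho> s))
      else 0)"

definition wedge :: "('v \<Rightarrow> real) list \<Rightarrow> 'v list \<Rightarrow> real" where
  "wedge \<phi>s vs = (\<Sum>p | p permutes {0..<length \<phi>s}.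
                    of_int (sign p) * (\<Prod>i<length \<phi>s. (\<phi>s ! i) (vs ! p i)))"

definition alt_inner :: "nat \<Rightarrow> nat \<Rightarrow> (nat \<Rightarrow> 'v) \<Rightarrow> ('v list \<Rightarrow> real) \<Rightarrow> ('v list \<Rightarrow> real) \<Rightarrow> real" where
  "alt_inner m n \<mu> \<omega> \<eta> =
     (\<Sum>\<tau>\<in>Sig m n. \<omega> (map (\<mu> \<circ> \<tau>) [1..<m+1]) * \<eta> (map (\<mu> \<circ> \<tau>) [1..<m+1]))"

definition theta :: "nat \<Rightarrow> nat \<Rightarrow> (nat \<Rightarrow> real) \<Rightarrow> ((nat \<Rightarrow> nat) \<Rightarrow> real) \<Rightarrow> (nat \<Rightarrow> 'v \<Rightarrow> real) \<Rightarrow> 'v list \<Rightarrow> real" where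
  "theta k n lam a \<mu>' vs =
     (\<Sum>\<rho>\<in>Sig k n. (-1) ^ sig_inv k n \<rho> * a \<rho> *
        (\<Sum>i=1..k. sqrt (lam_star k n lam \<rho> * lam (\<rho> i)) *
           wedge (map (\<mu>' \<circ> cmap k n \<rho>) [1..<n-k+1] @ [\<mu>' (\<rho> i)]) vs))"

end

theory Submission
  imports Defs
begin

text \<open>
  Evaluated on a basis vector \<mu>_\<tau>, the summand \<mu>'_\<rho>* \<and> \<mu>'_\<rho>(i) of \<theta> is a sign if the range
  of \<tau> is T = R(\<rho>*) \<union> {\<rho>(i)}, and 0 otherwise. Hence <\<theta>,\<theta>> is a sum over pairs (\<rho>,i), (\<rho>',j)
  with the same index set T. For such pairs \<lambda>_\<rho>* \<lambda>_\<rho>(i) = \<lambda>_T = \<lambda>_\<rho>'* \<lambda>_\<rho>'(j), so the square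
  roots multiply to \<lambda>_T, and the signs combine to (-1)^(i+j): (-1)^\<sigma>(\<rho>) only depends on the parity
  of the sum of R(\<rho>), and both index sets have the same sum. For \<rho> = \<rho>' the pairs are those with
  i = j, which give the diagonal of M without its \<lambda>_0 part; for \<rho> \<noteq> \<rho>' equality of the index sets
  is exactly the off-diagonal condition defining m_\<rho>\<rho>', and the pair (i,j) is then unique.
\<close>

lemma neg_one_power_cong: "even (a + b) \<Longrightarrow> (-1 :: 'a :: ring_1) ^ a = (-1) ^ b"
  by (auto simp: minus_one_power_iff)

lemma insert_Diff_eq_insert_Diff_iff:
  assumes x: "x \<in> R" and y: "y \<in> R'" and "R \<subseteq> U" "R' \<subseteq> U" "R \<noteq> R'"
  shows "insert x (U - R) = insert y (U - R') \<longleftrightarrow> R \<inter> (U - R') = {x} \<and> (U - R) \<inter> R' = {y}"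
proof
  assume eq: "insert x (U - R) = insert y (U - R')"
  have "x \<noteq> y"
  proof
    assume "x = y"
    with eq x y have "U - R = U - R'" by (metis Diff_iff insert_ident)
    with assms(3-5) show False by blast
  qed
  then have "x \<in> U - R'" "y \<in> U - R" using eq by (metis insert_iff insertI1)+
  moreover have "R \<inter> (U - R') \<subseteq> {x}" "(U - R) \<inter> R' \<subseteq> {y}"
    using eq by blast+
  ultimately show "R \<inter> (U - R') = {x} \<and> (U - R) \<inter> R' = {y}" using x y by blast
next
  assume "R \<inter> (U - R') = {x} \<and> (U - R) \<inter> R' = {y}"
  then show "insert x (U - R) = insert y (U - R')" by blast
qed

lemma sum_sum_if_eq_pair:
  fixes f :: "'a \<Rightarrow> 'b \<Rightarrow> 'c :: comm_monoid_add"
  assumes "finite A" "finite B" "s \<in> A" "t \<in> B"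
  shows "(\<Sum>i\<in>A. \<Sum>j\<in>B. if (i, j) = (s, t) then f i j else 0) = f s t"
proof -
  have "(\<Sum>i\<in>A. \<Sum>j\<in>B. if (i, j) = (s, t) then f i j else 0) = (\<Sum>i\<in>A. if i = s then f i t else 0)"
    using assms by (intro sum.cong refl) (auto simp: sum.delta)
  also have "\<dots> = f s t" using assms by (simp add: sum.delta)
  finally show ?thesis .
qed

lemma sum_sum_diagonal:
  fixes a x :: "'s \<Rightarrow> 'a :: comm_semiring_1"
  assumes "finite S"
  shows "(\<Sum>r\<in>S. \<Sum>r'\<in>S. a r * a r' * (if r = r' then x r else 0)) = (\<Sum>r\<in>S. (a r)\<^sup>2 * x r)"
proof (rule sum.cong[OF refl])
  fix r assume "r \<in> S"
  have "(\<Sum>r'\<in>S. a r * a r' * (if r = r' then x r else 0)) = (\<Sum>r'\<in>S. if r = r' then a r * a r * x r else 0)"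
    by (intro sum.cong) auto
  also have "\<dots> = (a r)\<^sup>2 * x r" using assms \<open>r \<in> S\<close> by (simp add: power2_eq_square)
  finally show "(\<Sum>r'\<in>S. a r * a r' * (if r = r' then x r else 0)) = (a r)\<^sup>2 * x r" .
qed

lemma sum_product_swap:
  fixes f :: "'t \<Rightarrow> 'r \<Rightarrow> 'i \<Rightarrow> 'a :: comm_semiring_0"
  shows "(\<Sum>\<tau>\<in>T. (\<Sum>\<rho>\<in>A. \<Sum>i\<in>I. f \<tau> \<rho> i) * (\<Sum>\<rho>'\<in>A. \<Sum>j\<in>I. f \<tau> \<rho>' j))
       = (\<Sum>\<rho>\<in>A. \<Sum>\<rho>'\<in>A. \<Sum>i\<in>I. \<Sum>j\<in>I. \<Sum>\<tau>\<in>T. f \<tau> \<rho> i * f \<tau> \<rho>' j)"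
proof -
  have "(\<Sum>\<tau>\<in>T. (\<Sum>\<rho>\<in>A. \<Sum>i\<in>I. f \<tau> \<rho> i) * (\<Sum>\<rho>'\<in>A. \<Sum>j\<in>I. f \<tau> \<rho>' j))
      = (\<Sum>\<tau>\<in>T. \<Sum>\<rho>\<in>A. \<Sum>\<rho>'\<in>A. \<Sum>i\<in>I. \<Sum>j\<in>I. f \<tau> \<rho> i * f \<tau> \<rho>' j)"
    by (simp add: sum_product)
  also have "\<dots> = (\<Sum>\<rho>\<in>A. \<Sum>\<rho>'\<in>A. \<Sum>i\<in>I. \<Sum>j\<in>I. \<Sum>\<tau>\<in>T. f \<tau> \<rho> i * f \<tau> \<rho>' j)"
    by (subst sum.swap, rule sum.cong[OF refl], subst sum.swap, rule sum.cong[OF refl],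
        subst sum.swap, rule sum.cong[OF refl], rule sum.swap)
  finally show ?thesis .
qed

definition insertion_perm :: "nat \<Rightarrow> nat \<Rightarrow> nat \<Rightarrow> nat" where
  "insertion_perm q r i = (if i < q then i else if i < r then i + 1 else if i = r then q else i)"

lemma insertion_perm:
  "q \<le> r \<Longrightarrow> insertion_perm q r permutes {q..r} \<and> sign (insertion_perm q r) = (-1) ^ (r - q)"
proof (induction r)
  case 0
  have "insertion_perm q 0 = id" by (auto simp: insertion_perm_def)
  then show ?case using 0 by (auto simp: sign_id permutes_id id_def)
next
  case (Suc r)
  show ?case
  proof (cases "q = Suc r")
    case True
    have "insertion_perm q (Suc r) = id" using True by (auto simp: insertion_perm_def)
    then show ?thesis using True by (auto simp: sign_id permutes_id id_def)
  next
    case False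
    then have qr: "q \<le> r" using Suc by simp
    have eq: "insertion_perm q (Suc r) = insertion_perm q r \<circ> Transposition.transpose r (Suc r)"
      using qr by (auto simp: insertion_perm_def Transposition.transpose_def fun_eq_iff)
    have p1: "insertion_perm q r permutes {q..Suc r}"
      using Suc.IH[OF qr] permutes_subset by fastforce
    have p2: "Transposition.transpose r (Suc r) permutes {q..Suc r}"
      using qr by (intro permutes_swap_id) auto
    have "sign (insertion_perm q (Suc r)) = sign (insertion_perm q r) * sign (Transposition.transpose r (Suc r))"
      unfolding eq using p1 p2 by (intro sign_compose) (auto intro: permutes_imp_permutation)
    also have "\<dots> = (-1) ^ (Suc r - q)"
      using Suc.IH[OF qr] qr by (simp add: sign_swap_id Suc_diff_le)
    finally show ?thesis using eq permutes_compose[OF p2 p1] by (simp only:)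
  qed
qed

lemma sorted_list_of_set_insert_nth:
  fixes C :: "nat set"
  assumes fin: "finite C" and x: "x \<notin> C" and i: "i \<le> card C"
  shows "(sorted_list_of_set C @ [x]) ! i
       = sorted_list_of_set (insert x C) ! insertion_perm (card {y\<in>C. y < x}) (card C) i"
proof -
  define l where "l = sorted_list_of_set C"
  define A where "A = filter (\<lambda>y. y < x) l"
  define B where "B = filter (\<lambda>y. x < y) l"
  have l: "sorted_wrt (<) l" "set l = C" using fin by (simp_all add: l_def)
  have "sorted_wrt (<) (A @ B)" "sorted_wrt (<) (A @ x # B)"
    using l(1) by (auto simp: A_def B_def sorted_wrt_append sorted_wrt_filter)
  moreover have "set (A @ B) = C" "set (A @ x # B) = insert x C"
    using l x by (auto simp: A_def B_def not_less le_less)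
  moreover have "distinct (A @ B)" "distinct (A @ x # B)"
    using calculation(1,2) by (simp_all add: strict_sorted_iff)
  ultimately have AB: "sorted_list_of_set C = A @ B"
    and AxB: "sorted_list_of_set (insert x C) = A @ x # B"
    using fin by (metis finite_insert sorted_list_of_set_unique distinct_card)+
  have "card {y\<in>C. y < x} = length A"
    using l by (metis A_def distinct_card distinct_filter set_filter strict_sorted_iff)
  moreover have "card C = length A + length B"
    using AB fin by (metis length_append length_sorted_list_of_set)
  ultimately show ?thesis
    using i unfolding AB AxB by (auto simp: insertion_perm_def nth_append Suc_diff_le)
qed

lemma inversion_pairs_append_sorted:
  fixes xs ys :: "'a :: linorder list"
  assumes xs: "sorted_wrt (<) xs" and ys: "sorted_wrt (<) ys"
  shows "{(i, j). i < j \<and> j < length (xs @ ys) \<and> (xs @ ys) ! j < (xs @ ys) ! i}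
       = (\<lambda>(i, t). (i, length xs + t)) ` (SIGMA i:{..<length xs}. {t. t < length ys \<and> ys ! t < xs ! i})"
    (is "_ = ?f ` ?I")
proof (intro set_eqI iffI)
  let ?m = "length xs"
  fix p assume "p \<in> {(i, j). i < j \<and> j < length (xs @ ys) \<and> (xs @ ys) ! j < (xs @ ys) ! i}"
  then obtain i j where p: "p = (i, j)" "i < j" "j < ?m + length ys" "(xs @ ys) ! j < (xs @ ys) ! i"
    by auto
  have "?m \<le> j"
  proof (rule ccontr)
    assume "\<not> ?m \<le> j"
    then have "xs ! i < xs ! j"
      using p by (intro sorted_wrt_nth_less[OF xs]) auto
    then show False using p \<open>\<not> ?m \<le> j\<close> by (simp add: nth_append)
  qed
  moreover have "i < ?m"
  proof (rule ccontr)
    assume "\<not> i < ?m"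
    then have "ys ! (i - ?m) < ys ! (j - ?m)"
      using p by (intro sorted_wrt_nth_less[OF ys]) auto
    then show False using p \<open>\<not> i < ?m\<close> \<open>?m \<le> j\<close> by (simp add: nth_append)
  qed
  ultimately show "p \<in> ?f ` ?I"
    using p by (auto simp: nth_append image_iff intro!: exI[of _ "j - ?m"])
qed (auto simp: nth_append)

lemma inversions_append_sorted:
  assumes xs: "sorted_wrt (<) xs" and ys: "sorted_wrt (<) ys"
  shows "inversions (xs @ ys) = (\<Sum>x\<in>set xs. card {y\<in>set ys. y < x})"
proof -
  let ?m = "length xs" and ?n = "length ys"
  have "inversions (xs @ ys) = card (SIGMA i:{..<?m}. {t. t < ?n \<and> ys ! t < xs ! i})"
    unfolding inversions_def inversion_pairs_append_sorted[OF xs ys]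
    by (simp add: card_image inj_on_def)
  also have "\<dots> = (\<Sum>i<?m. card {t. t < ?n \<and> ys ! t < xs ! i})"
    by (simp add: card_SigmaI)
  also have "\<dots> = (\<Sum>i<?m. card {y\<in>set ys. y < xs ! i})"
  proof (intro sum.cong refl)
    fix i
    have "{y\<in>set ys. y < xs ! i} = (!) ys ` {t. t < ?n \<and> ys ! t < xs ! i}"
      by (auto simp: in_set_conv_nth)
    moreover have "inj_on ((!) ys) {t. t < ?n \<and> ys ! t < xs ! i}"
      using ys by (intro inj_on_nth) (auto simp: strict_sorted_iff)
    ultimately show "card {t. t < ?n \<and> ys ! t < xs ! i} = card {y\<in>set ys. y < xs ! i}"
      by (simp add: card_image)
  qed
  also have "\<dots> = (\<Sum>x\<in>set xs. card {y\<in>set ys. y < x})"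
  proof -
    have "bij_betw ((!) xs) {..<?m} (set xs)"
      using xs by (intro bij_betw_nth) (auto simp: strict_sorted_iff)
    then show ?thesis by (rule sum.reindex_bij_betw)
  qed
  finally show ?thesis .
qed

section \<open>Increasing maps\<close>

lemma Sig_image_subset: "\<rho> \<in> Sig k N \<Longrightarrow> \<rho> ` {1..k} \<subseteq> {1..N}"
  unfolding Sig_def by auto

lemma Sig_outside: "\<rho> \<in> Sig k N \<Longrightarrow> i \<notin> {1..k} \<Longrightarrow> \<rho> i = 0"
  unfolding Sig_def by auto

lemma Sig_less_iff:
  "\<rho> \<in> Sig k N \<Longrightarrow> i \<in> {1..k} \<Longrightarrow> j \<in> {1..k} \<Longrightarrow> \<rho> i < \<rho> j \<longleftrightarrow> i < j"
  unfolding Sig_def by (auto simp: strict_mono_on_less)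

lemma Sig_inj_on: "\<rho> \<in> Sig k N \<Longrightarrow> inj_on \<rho> {1..k}"
  unfolding Sig_def by (auto intro: strict_mono_on_imp_inj_on)

lemma card_Sig_image: "\<rho> \<in> Sig k N \<Longrightarrow> card (\<rho> ` {1..k}) = k"
  using card_image[OF Sig_inj_on] by simp

lemma map_Sig_eq_sorted_list_of_set:
  assumes "\<rho> \<in> Sig k N"
  shows "map \<rho> [1..<k+1] = sorted_list_of_set (\<rho> ` {1..k})"
proof -
  have "sorted_wrt (<) (map \<rho> [1..<k+1])"
    unfolding sorted_wrt_map
    by (rule sorted_wrt_mono_rel[OF _ sorted_wrt_upt]) (use Sig_less_iff[OF assms] in auto)
  then have "sorted_list_of_set (\<rho> ` {1..k}) = map \<rho> [1..<k+1]"
    using card_Sig_image[OF assms] by (intro sorted_list_of_set_unique[THEN iffD1]) auto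
  then show ?thesis ..
qed

lemma Sig_eq_sorted_list_of_set_nth:
  assumes "\<rho> \<in> Sig k N" "i \<in> {1..k}"
  shows "\<rho> i = sorted_list_of_set (\<rho> ` {1..k}) ! (i - 1)"
proof -
  have "map \<rho> [1..<k+1] ! (i - 1) = \<rho> i"
    using assms(2) by (subst nth_map) (auto simp del: upt_Suc)
  then show ?thesis using map_Sig_eq_sorted_list_of_set[OF assms(1)] by simp
qed

lemma Sig_eqI:
  assumes "\<rho> \<in> Sig k N" "\<rho>' \<in> Sig k N" "\<rho> ` {1..k} = \<rho>' ` {1..k}"
  shows "\<rho> = \<rho>'"
proof
  fix i show "\<rho> i = \<rho>' i"
    by (cases "i \<in> {1..k}") (metis assms Sig_eq_sorted_list_of_set_nth, metis assms Sig_outside)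
qed

lemma finite_Sig: "finite (Sig k N)"
proof (rule inj_on_finite)
  show "inj_on (\<lambda>\<rho>. \<rho> ` {1..k}) (Sig k N)" by (rule inj_onI) (rule Sig_eqI)
  show "(\<lambda>\<rho>. \<rho> ` {1..k}) ` Sig k N \<subseteq> Pow {1..N}" using Sig_image_subset by blast
qed simp

definition Sig_of_set :: "nat \<Rightarrow> nat set \<Rightarrow> nat \<Rightarrow> nat" where
  "Sig_of_set k T i = (if i \<in> {1..k} then sorted_list_of_set T ! (i - 1) else 0)"

lemma Sig_of_set:
  assumes "T \<subseteq> {1..N}" "card T = k"
  shows "Sig_of_set k T \<in> Sig k N" and "Sig_of_set k T ` {1..k} = T"
proof -
  have fin: "finite T" using assms(1) finite_subset by blast
  let ?l = "sorted_list_of_set T"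
  have len: "length ?l = k" using assms by simp
  have "Sig_of_set k T ` {1..k} = (\<lambda>j. ?l ! j) ` {..<k}"
    by (force simp: Sig_of_set_def image_iff Bex_def intro: exI[of _ "Suc _"])
  also have "\<dots> = T" using bij_betw_nth[of ?l] len fin by (simp add: bij_betw_def)
  finally show img: "Sig_of_set k T ` {1..k} = T" .
  have "sorted_wrt (<) ?l" by simp
  then have "strict_mono_on {1..k} (Sig_of_set k T)"
    unfolding strict_mono_on_def Sig_of_set_def using len
    by (auto intro: sorted_wrt_nth_less)
  then show "Sig_of_set k T \<in> Sig k N"
    unfolding Sig_def using img assms(1) by (auto simp: Sig_of_set_def)
qed

text \<open>Each \<open>m\<close>-subset of \<open>{1..N}\<close> is the range of exactly one \<open>\<tau> \<in> Sig m N\<close>.\<close>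
lemma sum_Sig_range_indicators:
  fixes x y :: "'a :: semiring_0"
  assumes "T \<subseteq> {1..N}" "card T = m"
  shows "(\<Sum>\<tau>\<in>Sig m N. (if \<tau> ` {1..m} = T then x else 0) * (if \<tau> ` {1..m} = T' then y else 0))
    = (if T = T' then x * y else 0)"
proof -
  have "\<tau> ` {1..m} = T \<longleftrightarrow> \<tau> = Sig_of_set m T" if "\<tau> \<in> Sig m N" for \<tau>
    using Sig_eqI[OF that Sig_of_set(1)[OF assms]] Sig_of_set(2)[OF assms] by auto
  then have "(\<Sum>\<tau>\<in>Sig m N. (if \<tau> ` {1..m} = T then x else 0) * (if \<tau> ` {1..m} = T' then y else 0))
      = (\<Sum>\<tau>\<in>Sig m N. if \<tau> = Sig_of_set m T then (if T = T' then x * y else 0) else 0)"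
    by (intro sum.cong) auto
  also have "\<dots> = (if T = T' then x * y else 0)"
    using Sig_of_set(1)[OF assms] finite_Sig by (simp add: sum.delta')
  finally show ?thesis .
qed

lemma card_Diff_Sig_image:
  "\<rho> \<in> Sig k N \<Longrightarrow> card ({1..N} - \<rho> ` {1..k}) = N - k"
proof -
  assume "\<rho> \<in> Sig k N"
  then have "card ({1..N} - \<rho> ` {1..k}) = card {1..N} - card (\<rho> ` {1..k})"
    by (intro card_Diff_subset finite_imageI Sig_image_subset) auto
  then show ?thesis using card_Sig_image[OF \<open>\<rho> \<in> Sig k N\<close>] by simp
qed

lemma map_cmap_eq_sorted_list_of_set:
  assumes "\<rho> \<in> Sig k N"
  shows "map (cmap k N \<rho>) [1..<N-k+1] = sorted_list_of_set ({1..N} - \<rho> ` {1..k})"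
  using card_Diff_Sig_image[OF assms]
  by (intro nth_equalityI) (auto simp: cmap_def simp del: upt_Suc)

lemma cmap_image:
  "\<rho> \<in> Sig k N \<Longrightarrow> cmap k N \<rho> ` {1..N-k} = {1..N} - \<rho> ` {1..k}"
  using arg_cong[OF map_cmap_eq_sorted_list_of_set, of \<rho> k N set]
  by (simp del: upt_Suc add: atLeastLessThanSuc_atLeastAtMost)

lemma lam_star_eq_prod:
  "\<rho> \<in> Sig k N \<Longrightarrow> lam_star k N lam \<rho> = prod lam ({1..N} - \<rho> ` {1..k})"
  unfolding lam_star_def by (simp only: cmap_image)

lemma lam_star_nonneg:
  "\<rho> \<in> Sig k N \<Longrightarrow> (\<And>i. i \<le> N \<Longrightarrow> 0 \<le> lam i) \<Longrightarrow> 0 \<le> lam_star k N lam \<rho>"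
  unfolding lam_star_eq_prod by (intro prod_nonneg) auto

lemma card_Diff_Sig_image_below:
  assumes \<rho>: "\<rho> \<in> Sig k N" and i: "i \<in> {1..k}"
  shows "card {y\<in>{1..N} - \<rho> ` {1..k}. y < \<rho> i} = \<rho> i - i" and "i \<le> \<rho> i" and "\<rho> i - i \<le> N - k"
proof -
  let ?R = "\<rho> ` {1..k}"
  have "{y\<in>?R. y < \<rho> i} = \<rho> ` {1..<i}"
  proof
    show "{y\<in>?R. y < \<rho> i} \<subseteq> \<rho> ` {1..<i}"
      using Sig_less_iff[OF \<rho> _ i] by fastforce
    show "\<rho> ` {1..<i} \<subseteq> {y\<in>?R. y < \<rho> i}"
      using Sig_less_iff[OF \<rho> _ i] i by auto
  qed
  moreover have "inj_on \<rho> {1..<i}"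
    by (rule inj_on_subset[OF Sig_inj_on[OF \<rho>]]) (use i in auto)
  ultimately have below_R: "card {y\<in>?R. y < \<rho> i} = i - 1"
    by (simp add: card_image)
  have \<rho>i: "\<rho> i \<in> {1..N}" using Sig_image_subset[OF \<rho>] i by blast
  then have "{1..<\<rho> i} = {y\<in>?R. y < \<rho> i} \<union> {y\<in>{1..N} - ?R. y < \<rho> i}"
    using Sig_image_subset[OF \<rho>] by auto
  then have "card {1..<\<rho> i} = card {y\<in>?R. y < \<rho> i} + card {y\<in>{1..N} - ?R. y < \<rho> i}"
    by (simp only:) (rule card_Un_disjoint, auto)
  then have "\<rho> i - 1 = (i - 1) + card {y\<in>{1..N} - ?R. y < \<rho> i}"
    using below_R by simp
  with i \<rho>i show below: "card {y\<in>{1..N} - ?R. y < \<rho> i} = \<rho> i - i" and "i \<le> \<rho> i"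
    by auto
  have "card {y\<in>{1..N} - ?R. y < \<rho> i} \<le> card ({1..N} - ?R)"
    by (rule card_mono) auto
  then show "\<rho> i - i \<le> N - k"
    unfolding below card_Diff_Sig_image[OF \<rho>] .
qed

lemma sig_inv_eq_sum:
  assumes \<rho>: "\<rho> \<in> Sig k N"
  shows "sig_inv k N \<rho> = (\<Sum>i=1..k. \<rho> i - i)"
proof -
  let ?R = "\<rho> ` {1..k}" and ?C = "{1..N} - \<rho> ` {1..k}"
  have "sig_inv k N \<rho> = (\<Sum>x\<in>?R. card {y\<in>?C. y < x})"
    unfolding sig_inv_def map_Sig_eq_sorted_list_of_set[OF \<rho>] map_cmap_eq_sorted_list_of_set[OF \<rho>]
    by (subst inversions_append_sorted) auto
  also have "\<dots> = (\<Sum>i=1..k. card {y\<in>?C. y < \<rho> i})"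
    by (subst sum.reindex[OF Sig_inj_on[OF \<rho>]]) simp
  also have "\<dots> = (\<Sum>i=1..k. \<rho> i - i)"
    by (intro sum.cong refl) (rule card_Diff_Sig_image_below(1)[OF \<rho>])
  finally show ?thesis .
qed

lemma neg_one_power_sig_inv:
  assumes \<rho>: "\<rho> \<in> Sig k N"
  shows "(-1 :: 'a :: ring_1) ^ sig_inv k N \<rho> = (-1) ^ (\<Sum>(\<rho> ` {1..k}) + \<Sum>{1..k})"
proof (rule neg_one_power_cong)
  have "(\<Sum>i=1..k. \<rho> i - i) + \<Sum>{1..k} = (\<Sum>i=1..k. \<rho> i)"
    using card_Diff_Sig_image_below(2)[OF \<rho>] by (simp flip: sum.distrib)
  also have "\<dots> = \<Sum>(\<rho> ` {1..k})"
    by (subst sum.reindex[OF Sig_inj_on[OF \<rho>]]) simp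
  finally have "\<Sum>(\<rho> ` {1..k}) = sig_inv k N \<rho> + \<Sum>{1..k}"
    unfolding sig_inv_eq_sum[OF \<rho>] ..
  then have "sig_inv k N \<rho> + (\<Sum>(\<rho> ` {1..k}) + \<Sum>{1..k}) = 2 * (sig_inv k N \<rho> + \<Sum>{1..k})"
    by simp
  then show "even (sig_inv k N \<rho> + (\<Sum>(\<rho> ` {1..k}) + \<Sum>{1..k}))"
    by (metis dvd_triv_left)
qed

lemma neg_one_power_card_below:
  assumes \<rho>: "\<rho> \<in> Sig k N" and i: "i \<in> {1..k}"
  shows "(-1 :: 'a :: ring_1) ^ (N - k - card {y\<in>{1..N} - \<rho> ` {1..k}. y < \<rho> i})
       = (-1) ^ (N - k + \<rho> i + i)"
proof (rule neg_one_power_cong)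
  have parity: "even ((D - (r - i)) + (D + r + i))" if "i \<le> r" "r - i \<le> D" for D r :: nat
    using that by presburger
  show "even (N - k - card {y\<in>{1..N} - \<rho> ` {1..k}. y < \<rho> i} + (N - k + \<rho> i + i))"
    unfolding card_Diff_Sig_image_below(1)[OF \<rho> i]
    by (rule parity) (use card_Diff_Sig_image_below(2,3)[OF \<rho> i] in simp_all)
qed

section \<open>The index sets of the forms in theta\<close>

text \<open>The index set R(\<rho>*) \<union> {\<rho>(i)} of the form \<mu>'_\<rho>* \<and> \<mu>'_\<rho>(i).\<close>
definition compl_insert :: "nat \<Rightarrow> nat \<Rightarrow> (nat \<Rightarrow> nat) \<Rightarrow> nat \<Rightarrow> nat set" where
  "compl_insert k N \<rho> i = insert (\<rho> i) ({1..N} - \<rho> ` {1..k})"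

lemma compl_insert_subset: "\<rho> \<in> Sig k N \<Longrightarrow> i \<in> {1..k} \<Longrightarrow> compl_insert k N \<rho> i \<subseteq> {1..N}"
  using Sig_image_subset by (fastforce simp: compl_insert_def)

lemma card_compl_insert:
  "\<rho> \<in> Sig k N \<Longrightarrow> i \<in> {1..k} \<Longrightarrow> card (compl_insert k N \<rho> i) = N - k + 1"
  using card_Diff_Sig_image[of \<rho> k N] by (auto simp: compl_insert_def)

lemma lam_star_mult_eq_prod_compl_insert:
  "\<rho> \<in> Sig k N \<Longrightarrow> i \<in> {1..k} \<Longrightarrow>
    lam_star k N lam \<rho> * lam (\<rho> i) = prod lam (compl_insert k N \<rho> i)"
  by (simp add: compl_insert_def lam_star_eq_prod mult.commute)

lemma compl_insert_eq_iff:
  assumes \<rho>: "\<rho> \<in> Sig k N" and \<rho>': "\<rho>' \<in> Sig k N" and "\<rho> \<noteq> \<rho>'"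
    and s: "s \<in> {1..k}" and t: "t \<in> {1..k}"
  shows "compl_insert k N \<rho> s = compl_insert k N \<rho>' t \<longleftrightarrow>
    \<rho> ` {1..k} \<inter> ({1..N} - \<rho>' ` {1..k}) = {\<rho> s} \<and> ({1..N} - \<rho> ` {1..k}) \<inter> \<rho>' ` {1..k} = {\<rho>' t}"
  unfolding compl_insert_def
  using s t Sig_image_subset[OF \<rho>] Sig_image_subset[OF \<rho>'] Sig_eqI[OF \<rho> \<rho>'] \<open>\<rho> \<noteq> \<rho>'\<close>
  by (intro insert_Diff_eq_insert_Diff_iff) auto

lemma compl_insert_same_eq_iff:
  assumes \<rho>: "\<rho> \<in> Sig k N" and i: "i \<in> {1..k}" and j: "j \<in> {1..k}"
  shows "compl_insert k N \<rho> i = compl_insert k N \<rho> j \<longleftrightarrow> i = j"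
proof
  assume "compl_insert k N \<rho> i = compl_insert k N \<rho> j"
  then have "\<rho> i = \<rho> j" using i unfolding compl_insert_def by blast
  then show "i = j" using inj_onD[OF Sig_inj_on[OF \<rho>]] i j by blast
qed simp

lemma compl_insert_eq_unique:
  assumes \<rho>: "\<rho> \<in> Sig k N" and \<rho>': "\<rho>' \<in> Sig k N" and ne: "\<rho> \<noteq> \<rho>'"
    and s: "s \<in> {1..k}" and t: "t \<in> {1..k}" and st: "compl_insert k N \<rho> s = compl_insert k N \<rho>' t"
    and i: "i \<in> {1..k}" and j: "j \<in> {1..k}" and ij: "compl_insert k N \<rho> i = compl_insert k N \<rho>' j"
  shows "i = s \<and> j = t"
proof -
  have "{\<rho> i} = {\<rho> s}" "{\<rho>' j} = {\<rho>' t}"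
    using ij st unfolding compl_insert_eq_iff[OF \<rho> \<rho>' ne i j] compl_insert_eq_iff[OF \<rho> \<rho>' ne s t]
    by simp_all
  then have "\<rho> i = \<rho> s" "\<rho>' j = \<rho>' t" by simp_all
  then show ?thesis
    using inj_onD[OF Sig_inj_on[OF \<rho>] _ i s] inj_onD[OF Sig_inj_on[OF \<rho>'] _ j t] by simp
qed

section \<open>Wedge products on a biorthogonal system\<close>

definition biorthogonal :: "nat \<Rightarrow> (nat \<Rightarrow> 'v \<Rightarrow> real) \<Rightarrow> (nat \<Rightarrow> 'v) \<Rightarrow> bool" where
  "biorthogonal N \<mu>' \<mu> \<longleftrightarrow> (\<forall>i\<in>{1..N}. \<forall>j\<in>{1..N}. \<mu>' i (\<mu> j) = (if i = j then 1 else 0))"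

lemma prod_biorthogonal:
  fixes \<mu> :: "nat \<Rightarrow> 'v" and \<mu>' :: "nat \<Rightarrow> 'v \<Rightarrow> real"
  assumes dual: "biorthogonal N \<mu>' \<mu>"
    and "\<And>i. i \<in> I \<Longrightarrow> c i \<in> {1..N} \<and> t i \<in> {1..N}" and "finite I"
  shows "(\<Prod>i\<in>I. \<mu>' (c i) (\<mu> (t i))) = (if \<forall>i\<in>I. c i = t i then 1 else 0)"
  using assms(2,3) dual by (auto simp: biorthogonal_def intro: prod_zero)

lemma wedge_biorthogonal:
  fixes \<mu> :: "nat \<Rightarrow> 'v" and \<mu>' :: "nat \<Rightarrow> 'v \<Rightarrow> real"
  assumes dual: "biorthogonal N \<mu>' \<mu>"
    and cs: "set cs \<subseteq> {1..N}" "length cs = m"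
    and ts: "set ts \<subseteq> {1..N}" "length ts = m"
  shows "wedge (map \<mu>' cs) (map \<mu> ts)
       = (\<Sum>p | p permutes {0..<m}. if \<forall>i<m. cs ! i = ts ! p i then of_int (sign p) else 0)"
  unfolding wedge_def
proof (intro sum.cong)
  fix p assume "p \<in> {p. p permutes {0..<m}}"
  then have p: "p i < m" if "i < m" for i
    using permutes_in_image that by fastforce
  have "(\<Prod>i<m. \<mu>' (cs ! i) (\<mu> (ts ! p i))) = (if \<forall>i\<in>{..<m}. cs ! i = ts ! p i then 1 else 0)"
  proof (rule prod_biorthogonal[OF dual])
    fix i assume "i \<in> {..<m}"
    then show "cs ! i \<in> {1..N} \<and> ts ! p i \<in> {1..N}"
      using p cs ts nth_mem by (metis lessThan_iff subsetD)
  qed auto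
  then show "of_int (sign p) * (\<Prod>i<length (map \<mu>' cs). (map \<mu>' cs ! i) (map \<mu> ts ! p i))
      = (if \<forall>i<m. cs ! i = ts ! p i then of_int (sign p) else 0)"
    using cs ts p by simp
qed (use cs in simp)

lemma wedge_biorthogonal_perm:
  fixes \<mu> :: "nat \<Rightarrow> 'v" and \<mu>' :: "nat \<Rightarrow> 'v \<Rightarrow> real"
  assumes dual: "biorthogonal N \<mu>' \<mu>"
    and cs: "set cs \<subseteq> {1..N}" "length cs = m"
    and ts: "set ts \<subseteq> {1..N}" "length ts = m" "distinct ts"
    and p0: "p0 permutes {0..<m}" "\<And>i. i < m \<Longrightarrow> cs ! i = ts ! p0 i"
  shows "wedge (map \<mu>' cs) (map \<mu> ts) = of_int (sign p0)"
proof -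
  have "(\<forall>i<m. cs ! i = ts ! p i) \<longleftrightarrow> p = p0" if p: "p permutes {0..<m}" for p
  proof
    assume "\<forall>i<m. cs ! i = ts ! p i"
    then have "p i = p0 i" if "i < m" for i
      using that p0 p ts by (metis atLeastLessThan_iff le0 nth_eq_iff_index_eq permutes_in_image)
    then show "p = p0"
      using p p0(1) by (metis atLeastLessThan_iff le0 permutes_not_in ext)
  qed (use p0 in simp)
  then have "wedge (map \<mu>' cs) (map \<mu> ts)
      = (\<Sum>p | p permutes {0..<m}. if p = p0 then of_int (sign p0) else 0)"
    unfolding wedge_biorthogonal[OF dual cs ts(1,2)] by (intro sum.cong) auto
  then show ?thesis
    using p0(1) by (simp add: finite_permutations sum.delta')
qed

lemma wedge_biorthogonal_eq_0:
  fixes \<mu> :: "nat \<Rightarrow> 'v" and \<mu>' :: "nat \<Rightarrow> 'v \<Rightarrow> real"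
  assumes dual: "biorthogonal N \<mu>' \<mu>"
    and cs: "set cs \<subseteq> {1..N}" "length cs = m"
    and ts: "set ts \<subseteq> {1..N}" "length ts = m"
    and not_sub: "\<not> set cs \<subseteq> set ts"
  shows "wedge (map \<mu>' cs) (map \<mu> ts) = 0"
proof -
  have "\<not> (\<forall>i<m. cs ! i = ts ! p i)" if "p permutes {0..<m}" for p
  proof
    assume "\<forall>i<m. cs ! i = ts ! p i"
    then have "cs ! i \<in> set ts" if "i < m" for i
      using that ts permutes_in_image[OF \<open>p permutes {0..<m}\<close>, of i] by auto
    then show False using not_sub cs by (auto simp: in_set_conv_nth)
  qed
  then show ?thesis
    unfolding wedge_biorthogonal[OF dual cs ts] by (intro sum.neutral) auto
qed

lemma wedge_sorted_insert:
  fixes \<mu> :: "nat \<Rightarrow> 'v" and \<mu>' :: "nat \<Rightarrow> 'v \<Rightarrow> real"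
  assumes dual: "biorthogonal N \<mu>' \<mu>"
    and C: "C \<subseteq> {1..N}" and x: "x \<in> {1..N}" "x \<notin> C"
    and T: "T \<subseteq> {1..N}" "card T = card C + 1"
  shows "wedge (map \<mu>' (sorted_list_of_set C @ [x])) (map \<mu> (sorted_list_of_set T))
       = (if T = insert x C then (-1) ^ (card C - card {y\<in>C. y < x}) else 0)"
proof -
  define cs where "cs = sorted_list_of_set C @ [x]"
  define ts where "ts = sorted_list_of_set T"
  have fin: "finite C" "finite T" using C T(1) finite_subset by blast+
  have set_cs: "set cs = insert x C" using fin by (simp add: cs_def)
  have cs: "set cs \<subseteq> {1..N}" "length cs = card C + 1"
    using C x fin by (simp_all add: set_cs) (simp add: cs_def)
  have ts: "set ts \<subseteq> {1..N}" "length ts = card C + 1" "distinct ts"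
    using T fin by (simp_all add: ts_def)
  show ?thesis
  proof (cases "T = insert x C")
    case True
    let ?q = "card {y\<in>C. y < x}"
    have "?q \<le> card C" using fin by (intro card_mono) auto
    then have perm: "insertion_perm ?q (card C) permutes {0..<card C + 1}"
      and sign: "sign (insertion_perm ?q (card C)) = (-1) ^ (card C - ?q)"
      using insertion_perm[of ?q "card C"] by (auto intro: permutes_subset)
    have "cs ! j = ts ! insertion_perm ?q (card C) j" if "j < card C + 1" for j
      using sorted_list_of_set_insert_nth[OF fin(1) x(2)] that True by (simp add: cs_def ts_def)
    then show ?thesis
      using wedge_biorthogonal_perm[OF dual cs ts perm] sign True by (simp add: cs_def ts_def)
  next
    case False
    have "\<not> set cs \<subseteq> set ts"
    proof
      assume sub: "set cs \<subseteq> set ts"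
      have "card (set cs) = card (set ts)"
        using cs(2) ts(2,3) fin x(2) by (simp add: set_cs distinct_card)
      then have "set cs = set ts" using sub by (simp add: card_subset_eq)
      then show False using False fin by (simp add: set_cs ts_def)
    qed
    then show ?thesis
      using wedge_biorthogonal_eq_0[OF dual cs ts(1,2)] False by (simp add: cs_def ts_def)
  qed
qed

lemma wedge_compl_insert:
  fixes \<mu> :: "nat \<Rightarrow> 'v" and \<mu>' :: "nat \<Rightarrow> 'v \<Rightarrow> real"
  assumes dual: "biorthogonal N \<mu>' \<mu>"
    and \<rho>: "\<rho> \<in> Sig k N" and i: "i \<in> {1..k}" and \<tau>: "\<tau> \<in> Sig (N - k + 1) N"
  shows "wedge (map (\<mu>' \<circ> cmap k N \<rho>) [1..<N-k+1] @ [\<mu>' (\<rho> i)]) (map (\<mu> \<circ> \<tau>) [1..<N-k+1+1])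
    = (if \<tau> ` {1..N-k+1} = compl_insert k N \<rho> i then (-1) ^ (N - k + \<rho> i + i) else 0)"
proof -
  let ?C = "{1..N} - \<rho> ` {1..k}"
  have "\<rho> i \<in> {1..N}" "\<rho> i \<notin> ?C" using Sig_image_subset[OF \<rho>] i by blast+
  moreover have "\<tau> ` {1..N-k+1} \<subseteq> {1..N}" "card (\<tau> ` {1..N-k+1}) = card ?C + 1"
    using Sig_image_subset[OF \<tau>] card_Sig_image[OF \<tau>] card_Diff_Sig_image[OF \<rho>] by simp_all
  ultimately have "wedge (map \<mu>' (sorted_list_of_set ?C @ [\<rho> i])) (map \<mu> (sorted_list_of_set (\<tau> ` {1..N-k+1})))
      = (if \<tau> ` {1..N-k+1} = compl_insert k N \<rho> i then (-1) ^ (N - k - card {y\<in>?C. y < \<rho> i}) else 0)"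
    unfolding compl_insert_def card_Diff_Sig_image[OF \<rho>, symmetric]
    by (intro wedge_sorted_insert[OF dual]) auto
  then show ?thesis
    unfolding neg_one_power_card_below[OF \<rho> i] map_map[symmetric] map_cmap_eq_sorted_list_of_set[OF \<rho>]
      map_Sig_eq_sorted_list_of_set[OF \<tau>] by simp
qed

section \<open>The norm of theta\<close>

text \<open>The contribution of the summand (\<rho>, i) of \<theta> to the basis form of index set
  \<open>compl_insert k N \<rho> i\<close>: the factor (-1)^(N-k+\<rho>(i)+i) is the sign of the permutation sorting
  \<rho>*(1), ..., \<rho>*(N-k), \<rho>(i).\<close>
definition theta_coeff ::
    "nat \<Rightarrow> nat \<Rightarrow> (nat \<Rightarrow> real) \<Rightarrow> ((nat \<Rightarrow> nat) \<Rightarrow> real) \<Rightarrow> (nat \<Rightarrow> nat) \<Rightarrow> nat \<Rightarrow> real" where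
  "theta_coeff k N lam a \<rho> i =
     (-1) ^ sig_inv k N \<rho> * a \<rho> * sqrt (lam_star k N lam \<rho> * lam (\<rho> i)) * (-1) ^ (N - k + \<rho> i + i)"

lemma theta_on_basis:
  fixes \<mu> :: "nat \<Rightarrow> 'v" and \<mu>' :: "nat \<Rightarrow> 'v \<Rightarrow> real"
  assumes dual: "biorthogonal N \<mu>' \<mu>" and \<tau>: "\<tau> \<in> Sig (N - k + 1) N"
  shows "theta k N lam a \<mu>' (map (\<mu> \<circ> \<tau>) [1..<N-k+1+1])
       = (\<Sum>\<rho>\<in>Sig k N. \<Sum>i=1..k.
            if \<tau> ` {1..N-k+1} = compl_insert k N \<rho> i then theta_coeff k N lam a \<rho> i else 0)"
  unfolding theta_def
proof (intro sum.cong refl)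
  fix \<rho> assume \<rho>: "\<rho> \<in> Sig k N"
  have "(\<Sum>i=1..k. sqrt (lam_star k N lam \<rho> * lam (\<rho> i)) *
          wedge (map (\<mu>' \<circ> cmap k N \<rho>) [1..<N-k+1] @ [\<mu>' (\<rho> i)]) (map (\<mu> \<circ> \<tau>) [1..<N-k+1+1]))
      = (\<Sum>i=1..k. sqrt (lam_star k N lam \<rho> * lam (\<rho> i)) *
          (if \<tau> ` {1..N-k+1} = compl_insert k N \<rho> i then (-1) ^ (N - k + \<rho> i + i) else 0))"
    by (intro sum.cong refl) (simp only: wedge_compl_insert[OF dual \<rho> _ \<tau>])
  then show "(-1) ^ sig_inv k N \<rho> * a \<rho> *
        (\<Sum>i=1..k. sqrt (lam_star k N lam \<rho> * lam (\<rho> i)) *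
          wedge (map (\<mu>' \<circ> cmap k N \<rho>) [1..<N-k+1] @ [\<mu>' (\<rho> i)]) (map (\<mu> \<circ> \<tau>) [1..<N-k+1+1]))
      = (\<Sum>i=1..k. if \<tau> ` {1..N-k+1} = compl_insert k N \<rho> i then theta_coeff k N lam a \<rho> i else 0)"
    by (simp add: sum_distrib_left theta_coeff_def if_distrib ac_simps cong: if_cong)
qed

lemma alt_inner_theta:
  fixes \<mu> :: "nat \<Rightarrow> 'v" and \<mu>' :: "nat \<Rightarrow> 'v \<Rightarrow> real"
  assumes dual: "biorthogonal N \<mu>' \<mu>"
  shows "alt_inner (N - k + 1) N \<mu> (theta k N lam a \<mu>') (theta k N lam a \<mu>')
       = (\<Sum>\<rho>\<in>Sig k N. \<Sum>\<rho>'\<in>Sig k N. \<Sum>i=1..k. \<Sum>j=1..k.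
            if compl_insert k N \<rho> i = compl_insert k N \<rho>' j
            then theta_coeff k N lam a \<rho> i * theta_coeff k N lam a \<rho>' j else 0)"
proof -
  let ?c = "theta_coeff k N lam a" and ?m = "N - k + 1"
  define f where "f \<tau> \<rho> i = (if \<tau> ` {1..?m} = compl_insert k N \<rho> i then ?c \<rho> i else 0)" for \<tau> \<rho> i
  have "alt_inner ?m N \<mu> (theta k N lam a \<mu>') (theta k N lam a \<mu>')
      = (\<Sum>\<tau>\<in>Sig ?m N. (\<Sum>\<rho>\<in>Sig k N. \<Sum>i=1..k. f \<tau> \<rho> i) * (\<Sum>\<rho>'\<in>Sig k N. \<Sum>j=1..k. f \<tau> \<rho>' j))"
    unfolding alt_inner_def f_def by (intro sum.cong refl) (simp only: theta_on_basis[OF dual])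
  also have "\<dots> = (\<Sum>\<rho>\<in>Sig k N. \<Sum>\<rho>'\<in>Sig k N. \<Sum>i=1..k. \<Sum>j=1..k. \<Sum>\<tau>\<in>Sig ?m N. f \<tau> \<rho> i * f \<tau> \<rho>' j)"
    by (rule sum_product_swap)
  also have "\<dots> = (\<Sum>\<rho>\<in>Sig k N. \<Sum>\<rho>'\<in>Sig k N. \<Sum>i=1..k. \<Sum>j=1..k.
      if compl_insert k N \<rho> i = compl_insert k N \<rho>' j then ?c \<rho> i * ?c \<rho>' j else 0)"
    unfolding f_def
    by (intro sum.cong refl sum_Sig_range_indicators compl_insert_subset card_compl_insert)
  finally show ?thesis .
qed

lemma neg_one_power_compl_insert:
  assumes \<rho>: "\<rho> \<in> Sig k N" and \<rho>': "\<rho>' \<in> Sig k N" and s: "s \<in> {1..k}" and t: "t \<in> {1..k}"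
    and eq: "compl_insert k N \<rho> s = compl_insert k N \<rho>' t"
  shows "(-1) ^ sig_inv k N \<rho> * (-1) ^ (N - k + \<rho> s + s) * ((-1) ^ sig_inv k N \<rho>' * (-1) ^ (N - k + \<rho>' t + t))
       = ((-1) ^ (s + t) :: real)"
proof -
  let ?R = "\<rho> ` {1..k}" and ?R' = "\<rho>' ` {1..k}"
  have "\<Sum>?R + \<Sum>({1..N} - ?R) = \<Sum>{1..N}" "\<Sum>?R' + \<Sum>({1..N} - ?R') = \<Sum>{1..N}"
    using sum.subset_diff[OF Sig_image_subset[OF \<rho>] finite_atLeastAtMost, of "\<lambda>x. x"]
      sum.subset_diff[OF Sig_image_subset[OF \<rho>'] finite_atLeastAtMost, of "\<lambda>x. x"]
    by linarith+
  moreover have "\<Sum>({1..N} - ?R) + \<rho> s = \<Sum>({1..N} - ?R') + \<rho>' t"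
    using arg_cong[OF eq, of "\<lambda>X. \<Sum>X"] s t by (simp add: compl_insert_def)
  ultimately have sums: "\<Sum>?R' + \<rho> s = \<Sum>?R + \<rho>' t" by linarith
  show ?thesis
    unfolding neg_one_power_sig_inv[OF \<rho>] neg_one_power_sig_inv[OF \<rho>'] power_add[symmetric]
  proof (rule neg_one_power_cong)
    have "even (A + K + (D + x + s) + (B + K + (D + y + t)) + (s + t))"
      if "B + x = A + y" for A B K D x y :: nat
      using that by presburger
    then show "even (\<Sum>?R + \<Sum>{1..k} + (N - k + \<rho> s + s) + (\<Sum>?R' + \<Sum>{1..k} + (N - k + \<rho>' t + t)) + (s + t))"
      using sums by blast
  qed
qed

lemma theta_coeff_mult:
  assumes \<rho>: "\<rho> \<in> Sig k N" and \<rho>': "\<rho>' \<in> Sig k N" and s: "s \<in> {1..k}" and t: "t \<in> {1..k}"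
    and lam: "\<And>i. i \<le> N \<Longrightarrow> 0 \<le> lam i"
    and eq: "compl_insert k N \<rho> s = compl_insert k N \<rho>' t"
  shows "theta_coeff k N lam a \<rho> s * theta_coeff k N lam a \<rho>' t
       = a \<rho> * a \<rho>' * (lam_star k N lam \<rho> * lam (\<rho> s) * (-1) ^ (s + t))"
proof -
  let ?X = "prod lam (compl_insert k N \<rho> s)"
  have X: "lam_star k N lam \<rho> * lam (\<rho> s) = ?X" "lam_star k N lam \<rho>' * lam (\<rho>' t) = ?X"
    using lam_star_mult_eq_prod_compl_insert[OF \<rho> s] lam_star_mult_eq_prod_compl_insert[OF \<rho>' t] eq
    by simp_all
  have "0 \<le> ?X"
    using compl_insert_subset[OF \<rho> s] lam by (intro prod_nonneg) auto
  then have "sqrt ?X * sqrt ?X = ?X" by simp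
  moreover have "theta_coeff k N lam a \<rho> s * theta_coeff k N lam a \<rho>' t
      = a \<rho> * a \<rho>' * (sqrt ?X * sqrt ?X) *
        ((-1) ^ sig_inv k N \<rho> * (-1) ^ (N - k + \<rho> s + s) *
         ((-1) ^ sig_inv k N \<rho>' * (-1) ^ (N - k + \<rho>' t + t)))"
    unfolding theta_coeff_def X by (simp only: mult_ac)
  ultimately show ?thesis
    unfolding neg_one_power_compl_insert[OF \<rho> \<rho>' s t eq] X by simp
qed

section \<open>The matrix entries\<close>

lemma mentry_diag: "mentry k N lam \<rho> \<rho> = lam_star k N lam \<rho> * (lam 0 + (\<Sum>i=1..k. lam (\<rho> i)))"
  unfolding mentry_def by (rule if_P) (rule refl)

lemma mentry_offdiag_cases:
  assumes \<rho>: "\<rho> \<in> Sig k N" and \<rho>': "\<rho>' \<in> Sig k N" and ne: "\<rho> \<noteq> \<rho>'"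
  shows "mentry k N lam \<rho> \<rho>' =
    (if \<exists>s\<in>{1..k}. \<exists>t\<in>{1..k}. compl_insert k N \<rho> s = compl_insert k N \<rho>' t
     then (let (s, t) = (SOME (s, t). s \<in> {1..k} \<and> t \<in> {1..k} \<and> compl_insert k N \<rho> s = compl_insert k N \<rho>' t)
           in (-1) ^ (s + t) * lam_star k N lam \<rho> * lam (\<rho> s))
     else 0)"
proof -
  let ?X = "\<lambda>s t. \<rho> ` {1..k} \<inter> cmap k N \<rho>' ` {1..N-k} = {\<rho> s} \<and>
      cmap k N \<rho> ` {1..N-k} \<inter> \<rho>' ` {1..k} = {\<rho>' t}"
  have X: "?X s t \<longleftrightarrow> compl_insert k N \<rho> s = compl_insert k N \<rho>' t"
    if "s \<in> {1..k}" "t \<in> {1..k}" for s t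
    unfolding cmap_image[OF \<rho>] cmap_image[OF \<rho>'] compl_insert_eq_iff[OF \<rho> \<rho>' ne that] ..
  have ex: "(\<exists>s\<in>{1..k}. \<exists>t\<in>{1..k}. ?X s t)
      \<longleftrightarrow> (\<exists>s\<in>{1..k}. \<exists>t\<in>{1..k}. compl_insert k N \<rho> s = compl_insert k N \<rho>' t)"
    by (intro bex_cong refl) (simp only: X)
  have "(\<lambda>(s, t). s \<in> {1..k} \<and> t \<in> {1..k} \<and> ?X s t)
      = (\<lambda>(s, t). s \<in> {1..k} \<and> t \<in> {1..k} \<and> compl_insert k N \<rho> s = compl_insert k N \<rho>' t)"
    by (rule ext, simp only: split_beta X cong: conj_cong)
  then show ?thesis
    using ne unfolding mentry_def ex by (simp only: if_False)
qed

lemma mentry_offdiag: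
  assumes \<rho>: "\<rho> \<in> Sig k N" and \<rho>': "\<rho>' \<in> Sig k N" and ne: "\<rho> \<noteq> \<rho>'"
    and s: "s \<in> {1..k}" and t: "t \<in> {1..k}" and st: "compl_insert k N \<rho> s = compl_insert k N \<rho>' t"
  shows "mentry k N lam \<rho> \<rho>' = (-1) ^ (s + t) * lam_star k N lam \<rho> * lam (\<rho> s)"
proof -
  have "(SOME (i, j). i \<in> {1..k} \<and> j \<in> {1..k} \<and> compl_insert k N \<rho> i = compl_insert k N \<rho>' j) = (s, t)"
  proof (rule some_equality)
    fix p assume "case p of (i, j) \<Rightarrow> i \<in> {1..k} \<and> j \<in> {1..k} \<and> compl_insert k N \<rho> i = compl_insert k N \<rho>' j"
    moreover obtain i j where p: "p = (i, j)" by (cases p)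
    ultimately have "i \<in> {1..k}" "j \<in> {1..k}" "compl_insert k N \<rho> i = compl_insert k N \<rho>' j"
      by simp_all
    then show "p = (s, t)"
      using compl_insert_eq_unique[OF \<rho> \<rho>' ne s t st] p by simp
  qed (use s t st in simp)
  moreover have "\<exists>i\<in>{1..k}. \<exists>j\<in>{1..k}. compl_insert k N \<rho> i = compl_insert k N \<rho>' j"
    using s t st by blast
  ultimately show ?thesis
    by (simp add: mentry_offdiag_cases[OF \<rho> \<rho>' ne])
qed

lemma mentry_offdiag_eq_0:
  assumes \<rho>: "\<rho> \<in> Sig k N" and \<rho>': "\<rho>' \<in> Sig k N" and ne: "\<rho> \<noteq> \<rho>'"
    and none: "\<And>s t. s \<in> {1..k} \<Longrightarrow> t \<in> {1..k} \<Longrightarrow> compl_insert k N \<rho> s \<noteq> compl_insert k N \<rho>' t"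
  shows "mentry k N lam \<rho> \<rho>' = 0"
proof -
  have "\<not> (\<exists>s\<in>{1..k}. \<exists>t\<in>{1..k}. compl_insert k N \<rho> s = compl_insert k N \<rho>' t)"
    using none by blast
  then show ?thesis
    by (simp only: mentry_offdiag_cases[OF \<rho> \<rho>' ne] if_False)
qed

lemma sum_compl_insert_pairs_diag:
  assumes \<rho>: "\<rho> \<in> Sig k N"
  shows "(\<Sum>i=1..k. \<Sum>j=1..k. if compl_insert k N \<rho> i = compl_insert k N \<rho> j
            then lam_star k N lam \<rho> * lam (\<rho> i) * (-1) ^ (i + j) else 0)
       = mentry k N lam \<rho> \<rho> - lam_star k N lam \<rho> * lam 0"
proof -
  have "(\<Sum>i=1..k. \<Sum>j=1..k. if compl_insert k N \<rho> i = compl_insert k N \<rho> j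
            then lam_star k N lam \<rho> * lam (\<rho> i) * (-1) ^ (i + j) else 0)
      = (\<Sum>i=1..k. \<Sum>j=1..k. if i = j then lam_star k N lam \<rho> * lam (\<rho> i) * (-1) ^ (i + j) else 0)"
    by (intro sum.cong refl) (simp only: compl_insert_same_eq_iff[OF \<rho>])
  also have "\<dots> = (\<Sum>i=1..k. lam_star k N lam \<rho> * lam (\<rho> i))"
    by (simp add: sum.delta flip: mult_2)
  also have "\<dots> = mentry k N lam \<rho> \<rho> - lam_star k N lam \<rho> * lam 0"
    unfolding mentry_diag by (simp add: sum_distrib_left algebra_simps)
  finally show ?thesis .
qed

lemma sum_compl_insert_pairs_offdiag:
  assumes \<rho>: "\<rho> \<in> Sig k N" and \<rho>': "\<rho>' \<in> Sig k N" and ne: "\<rho> \<noteq> \<rho>'"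
  shows "(\<Sum>i=1..k. \<Sum>j=1..k. if compl_insert k N \<rho> i = compl_insert k N \<rho>' j
            then lam_star k N lam \<rho> * lam (\<rho> i) * (-1) ^ (i + j) else 0)
       = mentry k N lam \<rho> \<rho>'"
    (is "(\<Sum>i=1..k. \<Sum>j=1..k. if _ then ?f i j else 0) = _")
proof (cases "\<exists>s\<in>{1..k}. \<exists>t\<in>{1..k}. compl_insert k N \<rho> s = compl_insert k N \<rho>' t")
  case True
  then obtain s t where s: "s \<in> {1..k}" and t: "t \<in> {1..k}"
    and st: "compl_insert k N \<rho> s = compl_insert k N \<rho>' t" by blast
  have "compl_insert k N \<rho> i = compl_insert k N \<rho>' j \<longleftrightarrow> (i, j) = (s, t)"
    if "i \<in> {1..k}" "j \<in> {1..k}" for i j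
    using compl_insert_eq_unique[OF \<rho> \<rho>' ne s t st that] st by blast
  then have "(\<Sum>i=1..k. \<Sum>j=1..k. if compl_insert k N \<rho> i = compl_insert k N \<rho>' j then ?f i j else 0)
      = (\<Sum>i=1..k. \<Sum>j=1..k. if (i, j) = (s, t) then ?f i j else 0)"
    by (intro sum.cong refl) (simp only:)
  also have "\<dots> = ?f s t"
    by (rule sum_sum_if_eq_pair[OF finite_atLeastAtMost finite_atLeastAtMost s t])
  finally show ?thesis
    using mentry_offdiag[OF \<rho> \<rho>' ne s t st] by (simp add: mult_ac)
next
  case False
  then have "mentry k N lam \<rho> \<rho>' = 0"
    by (intro mentry_offdiag_eq_0[OF \<rho> \<rho>' ne]) blast
  moreover have "(\<Sum>i=1..k. \<Sum>j=1..k. if compl_insert k N \<rho> i = compl_insert k N \<rho>' j then ?f i j else 0) = 0"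
    using False by (intro sum.neutral ballI) auto
  ultimately show ?thesis by simp
qed

lemma sum_compl_insert_pairs:
  assumes \<rho>: "\<rho> \<in> Sig k N" and \<rho>': "\<rho>' \<in> Sig k N"
  shows "(\<Sum>i=1..k. \<Sum>j=1..k. if compl_insert k N \<rho> i = compl_insert k N \<rho>' j
            then lam_star k N lam \<rho> * lam (\<rho> i) * (-1) ^ (i + j) else 0)
       = mentry k N lam \<rho> \<rho>' - (if \<rho> = \<rho>' then lam_star k N lam \<rho> * lam 0 else 0)"
proof (cases "\<rho> = \<rho>'")
  case True
  then show ?thesis using sum_compl_insert_pairs_diag[OF \<rho>] by simp
next
  case False
  then show ?thesis using sum_compl_insert_pairs_offdiag[OF \<rho> \<rho>' False] by simp
qed

theorem quadratic_form_mentry_eq: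
  fixes \<mu> :: "nat \<Rightarrow> 'v" and \<mu>' :: "nat \<Rightarrow> 'v \<Rightarrow> real"
  assumes lam: "\<And>i. i \<le> N \<Longrightarrow> 0 \<le> lam i" and dual: "biorthogonal N \<mu>' \<mu>"
  shows "(\<Sum>\<rho>\<in>Sig k N. \<Sum>\<rho>'\<in>Sig k N. a \<rho> * a \<rho>' * mentry k N lam \<rho> \<rho>')
       = lam 0 * (\<Sum>\<rho>\<in>Sig k N. (a \<rho>)\<^sup>2 * lam_star k N lam \<rho>)
         + alt_inner (N - k + 1) N \<mu> (theta k N lam a \<mu>') (theta k N lam a \<mu>')"
proof -
  let ?S = "Sig k N"
  have "alt_inner (N - k + 1) N \<mu> (theta k N lam a \<mu>') (theta k N lam a \<mu>')
      = (\<Sum>\<rho>\<in>?S. \<Sum>\<rho>'\<in>?S. \<Sum>i=1..k. \<Sum>j=1..k. if compl_insert k N \<rho> i = compl_insert k N \<rho>' j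
            then theta_coeff k N lam a \<rho> i * theta_coeff k N lam a \<rho>' j else 0)"
    by (rule alt_inner_theta[OF dual])
  also have "\<dots> = (\<Sum>\<rho>\<in>?S. \<Sum>\<rho>'\<in>?S. \<Sum>i=1..k. \<Sum>j=1..k. a \<rho> * a \<rho>' *
      (if compl_insert k N \<rho> i = compl_insert k N \<rho>' j
       then lam_star k N lam \<rho> * lam (\<rho> i) * (-1) ^ (i + j) else 0))"
    by (intro sum.cong refl) (simp add: theta_coeff_mult lam)
  also have "\<dots> = (\<Sum>\<rho>\<in>?S. \<Sum>\<rho>'\<in>?S. a \<rho> * a \<rho>' * (\<Sum>i=1..k. \<Sum>j=1..k.
      if compl_insert k N \<rho> i = compl_insert k N \<rho>' j
      then lam_star k N lam \<rho> * lam (\<rho> i) * (-1) ^ (i + j) else 0))"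
    by (simp only: sum_distrib_left)
  also have "\<dots> = (\<Sum>\<rho>\<in>?S. \<Sum>\<rho>'\<in>?S. a \<rho> * a \<rho>' *
      (mentry k N lam \<rho> \<rho>' - (if \<rho> = \<rho>' then lam_star k N lam \<rho> * lam 0 else 0)))"
    by (intro sum.cong refl) (simp only: sum_compl_insert_pairs)
  also have "\<dots> = (\<Sum>\<rho>\<in>?S. \<Sum>\<rho>'\<in>?S. a \<rho> * a \<rho>' * mentry k N lam \<rho> \<rho>')
      - (\<Sum>\<rho>\<in>?S. (a \<rho>)\<^sup>2 * (lam_star k N lam \<rho> * lam 0))"
    by (simp only: right_diff_distrib sum_subtractf sum_sum_diagonal[OF finite_Sig])
  also have "\<dots> = (\<Sum>\<rho>\<in>?S. \<Sum>\<rho>'\<in>?S. a \<rho> * a \<rho>' * mentry k N lam \<rho> \<rho>')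
      - lam 0 * (\<Sum>\<rho>\<in>?S. (a \<rho>)\<^sup>2 * lam_star k N lam \<rho>)"
    by (simp add: sum_distrib_left mult_ac)
  finally show ?thesis by simp
qed

theorem lemma3p7:
  fixes k :: nat and a :: "(nat \<Rightarrow> nat) \<Rightarrow> real" and lam :: "nat \<Rightarrow> real"
    and \<mu> :: "nat \<Rightarrow> real ^ 'n" and \<mu>' :: "nat \<Rightarrow> real ^ 'n \<Rightarrow> real"
  assumes "1 \<le> k" and "k \<le> CARD('n)"
    and "\<And>i. i \<le> CARD('n) \<Longrightarrow> 0 \<le> lam i"
    and "\<And>i j. i \<in> {1..CARD('n)} \<Longrightarrow> j \<in> {1..CARD('n)} \<Longrightarrow>
           \<mu> i \<bullet> \<mu> j = (if i = j then 1 else 0)"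
    and "\<And>i. i \<in> {1..CARD('n)} \<Longrightarrow> linear (\<mu>' i)"
    and "\<And>i j. i \<in> {1..CARD('n)} \<Longrightarrow> j \<in> {1..CARD('n)} \<Longrightarrow>
           \<mu>' i (\<mu> j) = (if i = j then 1 else 0)"
  shows "(\<Sum>\<rho>\<in>Sig k CARD('n). \<Sum>\<rho>'\<in>Sig k CARD('n). a \<rho> * a \<rho>' * mentry k CARD('n) lam \<rho> \<rho>')
           = lam 0 * (\<Sum>\<rho>\<in>Sig k CARD('n). (a \<rho>)\<^sup>2 * lam_star k CARD('n) lam \<rho>)
             + alt_inner (CARD('n) - k + 1) CARD('n) \<mu>
                 (theta k CARD('n) lam a \<mu>') (theta k CARD('n) lam a \<mu>')
         \<and> 0 \<le> (\<Sum>\<rho>\<in>Sig k CARD('n). \<Sum>\<rho>'\<in>Sig k CARD('n). a \<rho> * a \<rho>' * mentry k CARD('n) lam \<rho> \<rho>')"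
proof -
  have dual: "biorthogonal CARD('n) \<mu>' \<mu>"
    using assms(6) by (simp add: biorthogonal_def)
  note identity = quadratic_form_mentry_eq[where k = k and a = a, OF assms(3) dual]
  have "0 \<le> lam 0 * (\<Sum>\<rho>\<in>Sig k CARD('n). (a \<rho>)\<^sup>2 * lam_star k CARD('n) lam \<rho>)"
    using assms(3) lam_star_nonneg[OF _ assms(3)] by (intro mult_nonneg_nonneg sum_nonneg) auto
  moreover have "0 \<le> alt_inner (CARD('n) - k + 1) CARD('n) \<mu> (theta k CARD('n) lam a \<mu>') (theta k CARD('n) lam a \<mu>')"
    unfolding alt_inner_def by (intro sum_nonneg) simp
  ultimately show ?thesis using identity by simp
qed

end
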